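(* Let $G$ be a multigraph of even order with $\Delta(G) < \Gamma(G) \le \Delta(G)+1$, and write $\Delta = \Delta(G)$. Let $S \subseteq V(G)$ with $|S|$ odd, $|S|\ge 3$, such that $\langle S\rangle$ is $\Delta$-overfull in $G$ and $\operatorname{sl}(\langle S\rangle, \Delta)$ is minimum among all $\Delta$-overfull induced odd-order subgraphs of $G$. Then $\Delta(G_S) \le \Delta(G)$, $\Gamma(G_S) \le \Delta(G)+1$, $\Delta(G_{S^c}) \le \Delta(G)$, and $\Gamma(G_{S^c}) \le \Delta(G)+1$, where $S^c = V(G)\setminus S$.
   Context: Multigraphs are finite and loopless, multiple edges allowed. For $S \subseteq V(G)$, $\langle S\rangle$ is the induced subgraph. For a multigraph $H$ of odd order $n(H)\ge 3$ with $e(H)$ edges, $t(H) = 2e(H)/(n(H)-1)$; $H$ is $k$-overfull if $t(H)>k$. The $k$-slack is $\operatorname{sl}(H,k) = (k+1)(n(H)-1)/2 - e(H)$. $\Gamma(G) = \max\{t(\langle R\rangle) : R\subseteq V(G), |R| \text{ odd}, |R|\ge 3\}$ (statements about $\Gamma$ of a multigraph with no such $R$ are vacuous). Shrinking: for a nonempty proper subset $S$ of $V(G)$, $G_S$ has vertex set $(V(G)\setminus S)\cup\{s\}$ for a new vertex $s$; its edges are the edges of $G - S$ together with, for each $u \notin S$, exactly as many edges $us$ as there are edges of $G$ joining $u$ to vertices of $S$. *)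

theory Defs
  imports Complex_Main
begin

text \<open>A finite loopless multigraph is given by a finite vertex set V and a
  symmetric multiplicity function m (m u v = number of edges joining u and v),
  vanishing on the diagonal and outside V.\<close>

definition multigraph :: "'a set \<Rightarrow> ('a \<Rightarrow> 'a \<Rightarrow> nat) \<Rightarrow> bool" where
  "multigraph V m \<longleftrightarrow> finite V \<and> (\<forall>u v. m u v = m v u) \<and> (\<forall>u. m u u = 0)
     \<and> (\<forall>u v. m u v \<noteq> 0 \<longrightarrow> u \<in> V \<and> v \<in> V)"

definition degree :: "'a set \<Rightarrow> ('a \<Rightarrow> 'a \<Rightarrow> nat) \<Rightarrow> 'a \<Rightarrow> nat" where
  "degree V m u = (\<Sum>v\<in>V. m u v)"

definition max_degree :: "'a set \<Rightarrow> ('a \<Rightarrow> 'a \<Rightarrow> nat) \<Rightarrow> nat" where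
  "max_degree V m = Max (degree V m ` V)"

definition edges_in :: "('a \<Rightarrow> 'a \<Rightarrow> nat) \<Rightarrow> 'a set \<Rightarrow> nat" where
  "edges_in m R = (\<Sum>u\<in>R. \<Sum>v\<in>R. m u v) div 2"

definition tval :: "('a \<Rightarrow> 'a \<Rightarrow> nat) \<Rightarrow> 'a set \<Rightarrow> real" where
  "tval m R = 2 * real (edges_in m R) / (real (card R) - 1)"

definition overfull :: "('a \<Rightarrow> 'a \<Rightarrow> nat) \<Rightarrow> 'a set \<Rightarrow> nat \<Rightarrow> bool" where
  "overfull m R k \<longleftrightarrow> tval m R > real k"

definition slack :: "('a \<Rightarrow> 'a \<Rightarrow> nat) \<Rightarrow> 'a set \<Rightarrow> nat \<Rightarrow> real" where
  "slack m R k = (real k + 1) * (real (card R) - 1) / 2 - real (edges_in m R)"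

definition odd_sets :: "'a set \<Rightarrow> 'a set set" where
  "odd_sets V = {R. R \<subseteq> V \<and> odd (card R) \<and> card R \<ge> 3}"

definition Gamma :: "'a set \<Rightarrow> ('a \<Rightarrow> 'a \<Rightarrow> nat) \<Rightarrow> real" where
  "Gamma V m = Max (tval m ` odd_sets V)"

text \<open>Shrinking S to a new vertex; the new vertex is None, old vertices are Some u.\<close>
definition shrink_V :: "'a set \<Rightarrow> 'a set \<Rightarrow> 'a option set" where
  "shrink_V V S = Some ` (V - S) \<union> {None}"

fun shrink_m :: "('a \<Rightarrow> 'a \<Rightarrow> nat) \<Rightarrow> 'a set \<Rightarrow> 'a option \<Rightarrow> 'a option \<Rightarrow> nat" where
  "shrink_m m S (Some u) (Some v) = (if u \<notin> S \<and> v \<notin> S then m u v else 0)"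
| "shrink_m m S (Some u) None = (if u \<notin> S then (\<Sum>w\<in>S. m u w) else 0)"
| "shrink_m m S None (Some v) = (if v \<notin> S then (\<Sum>w\<in>S. m v w) else 0)"
| "shrink_m m S None None = 0"

end

theory Submission
  imports Defs
begin

text \<open>Write e(A,B) for the number of edge ends from A into B. The new vertex of G_S has degree
  e(S, V - S), and e(S, V - S) < \<Delta> because e(S,S) > \<Delta> (|S| - 1) while e(S,V) \<le> \<Delta> |S|.
  An odd set of G_S avoiding the new vertex is an odd set of G; one containing it comes from
  an even set B \<subseteq> V - S, and its density bound e(B,B) + 2 e(B,S) \<le> (\<Delta> + 1) |B| follows by
  comparing S with the odd set B \<union> S: either B \<union> S is not \<Delta>-overfull, or its slack is at
  least that of S. For G_(V-S) an even set B \<subseteq> S is handled in the same way, now comparing S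
  with the odd set S - B and using the degree bound e(B,V) \<le> \<Delta> |B|.\<close>

text \<open>For disjoint A and B this is the number of edges between them; on the diagonal
  every edge of the induced subgraph is counted twice (see edges_between_self).\<close>
definition edges_between :: "('a \<Rightarrow> 'a \<Rightarrow> nat) \<Rightarrow> 'a set \<Rightarrow> 'a set \<Rightarrow> nat" where
  "edges_between m A B = (\<Sum>u\<in>A. \<Sum>v\<in>B. m u v)"

lemma edges_between_Un_left:
  "finite A1 \<Longrightarrow> finite A2 \<Longrightarrow> A1 \<inter> A2 = {} \<Longrightarrow>
    edges_between m (A1 \<union> A2) B = edges_between m A1 B + edges_between m A2 B"
  by (simp add: edges_between_def sum.union_disjoint)

lemma edges_between_Un_right:
  "finite B1 \<Longrightarrow> finite B2 \<Longrightarrow> B1 \<inter> B2 = {} \<Longrightarrow>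
    edges_between m A (B1 \<union> B2) = edges_between m A B1 + edges_between m A B2"
  by (simp add: edges_between_def sum.union_disjoint sum.distrib)

lemma edges_between_commute:
  assumes "\<forall>u v. m u v = m v u"
  shows "edges_between m A B = edges_between m B A"
  unfolding edges_between_def using assms by (subst sum.swap) simp

lemma edges_between_Un_self:
  assumes "\<forall>u v. m u v = m v u" "finite A" "finite B" "A \<inter> B = {}"
  shows "edges_between m (A \<union> B) (A \<union> B)
    = edges_between m A A + 2 * edges_between m A B + edges_between m B B"
  using assms edges_between_commute[OF assms(1), of B A]
  by (simp add: edges_between_Un_left edges_between_Un_right)

lemma edges_between_self:
  assumes G: "multigraph V m" and R: "R \<subseteq> V"
  shows "edges_between m R R = 2 * edges_in m R"
proof -
  have sym: "\<forall>u v. m u v = m v u" and diag: "\<forall>u. m u u = 0" and fin: "finite R"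
    using G R finite_subset by (auto simp: multigraph_def)
  have "even (edges_between m R R)"
    using fin
  proof (induction R rule: finite_induct)
    case empty
    then show ?case by (simp add: edges_between_def)
  next
    case (insert x F)
    then show ?case
      using edges_between_Un_self[OF sym, of "{x}" F] diag
      by (simp add: edges_between_def)
  qed
  then show ?thesis by (simp add: edges_in_def edges_between_def)
qed

lemma tval_odd_set:
  assumes "multigraph V m" "R \<in> odd_sets V"
  shows "tval m R = real (edges_between m R R) / real (card R - 1)"
  using assms edges_between_self[OF assms(1), of R]
  by (auto simp: tval_def odd_sets_def of_nat_diff)

lemma tval_le_iff:
  assumes "multigraph V m" "R \<in> odd_sets V"
  shows "tval m R \<le> real k + 1 \<longleftrightarrow> edges_between m R R \<le> (k + 1) * (card R - 1)"
proof -
  have "real (card R - 1) > 0" using assms(2) by (simp add: odd_sets_def)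
  then have "tval m R \<le> real k + 1 \<longleftrightarrow>
      real (edges_between m R R) \<le> (real k + 1) * real (card R - 1)"
    unfolding tval_odd_set[OF assms] by (rule pos_divide_le_eq)
  also have "(real k + 1) * real (card R - 1) = real ((k + 1) * (card R - 1))"
    by (simp only: of_nat_mult of_nat_add of_nat_1)
  finally show ?thesis by (simp only: of_nat_le_iff)
qed

lemma overfull_iff:
  assumes "multigraph V m" "R \<in> odd_sets V"
  shows "overfull m R k \<longleftrightarrow> k * (card R - 1) < edges_between m R R"
proof -
  have "real (card R - 1) > 0" using assms(2) by (simp add: odd_sets_def)
  then have "overfull m R k \<longleftrightarrow> real k * real (card R - 1) < real (edges_between m R R)"
    unfolding overfull_def tval_odd_set[OF assms] by (rule pos_less_divide_eq)
  also have "real k * real (card R - 1) = real (k * (card R - 1))"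
    by (simp only: of_nat_mult)
  finally show ?thesis by (simp only: of_nat_less_iff)
qed

lemma slack_odd_set:
  assumes "multigraph V m" "R \<in> odd_sets V"
  shows "slack m R k = (real ((k + 1) * (card R - 1)) - real (edges_between m R R)) / 2"
proof -
  have "card R \<ge> 1" using assms(2) by (simp add: odd_sets_def)
  then have "(real k + 1) * (real (card R) - 1) = real ((k + 1) * (card R - 1))"
    by (simp only: of_nat_mult of_nat_diff of_nat_add of_nat_1)
  moreover have "real (edges_in m R) = real (edges_between m R R) / 2"
    using edges_between_self[OF assms(1)] assms(2) by (simp add: odd_sets_def)
  ultimately show ?thesis by (simp only: slack_def diff_divide_distrib)
qed

lemma slack_le_iff:
  assumes "multigraph V m" "R \<in> odd_sets V" "S \<in> odd_sets V"
  shows "slack m S k \<le> slack m R k \<longleftrightarrow>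
    (k + 1) * (card S - 1) + edges_between m R R \<le> (k + 1) * (card R - 1) + edges_between m S S"
proof -
  have halves: "(x - y) / 2 \<le> (z - w) / 2 \<longleftrightarrow> x + w \<le> z + y" for x y z w :: real
    by (auto simp: field_simps)
  show ?thesis
    unfolding slack_odd_set[OF assms(1,2)] slack_odd_set[OF assms(1,3)] halves
    by (simp only: of_nat_add[symmetric] of_nat_le_iff)
qed

lemma shrink_V_eq: "shrink_V V X = insert None (Some ` (V - X))"
  by (auto simp: shrink_V_def)

lemma multigraph_shrink:
  assumes "multigraph V m"
  shows "multigraph (shrink_V V X) (shrink_m m X)"
proof -
  have supp: "u \<in> V" if "m u v \<noteq> 0" for u v
    using assms that by (auto simp: multigraph_def)
  then have supp_sum: "u \<in> V" if "(\<Sum>w\<in>X. m u w) \<noteq> 0" for u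
    using that by (meson sum.neutral)
  have "shrink_m m X x y = shrink_m m X y x" for x y
    using assms by (cases x; cases y) (auto simp: multigraph_def)
  moreover have "shrink_m m X x x = 0" for x
    using assms by (cases x) (auto simp: multigraph_def)
  moreover have "x \<in> shrink_V V X \<and> y \<in> shrink_V V X" if "shrink_m m X x y \<noteq> 0" for x y
    using that supp supp_sum assms
    by (cases x; cases y) (auto simp: multigraph_def shrink_V_def split: if_splits)
  moreover have "finite (shrink_V V X)"
    using assms by (simp add: multigraph_def shrink_V_def)
  ultimately show ?thesis
    unfolding multigraph_def by blast
qed

lemma degree_shrink_Some:
  assumes "finite V" "X \<subseteq> V" "u \<in> V - X"
  shows "degree (shrink_V V X) (shrink_m m X) (Some u) = degree V m u"
proof -
  have "degree (shrink_V V X) (shrink_m m X) (Some u)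
      = (\<Sum>w\<in>X. m u w) + (\<Sum>v\<in>V - X. m u v)"
    using assms by (simp add: degree_def shrink_V_eq sum.reindex)
  also have "\<dots> = degree V m u"
    using sum.subset_diff[OF assms(2,1), of "m u"] by (simp add: degree_def)
  finally show ?thesis .
qed

lemma degree_shrink_None:
  assumes "finite V"
  shows "degree (shrink_V V X) (shrink_m m X) None = edges_between m (V - X) X"
  using assms by (simp add: degree_def shrink_V_eq sum.reindex edges_between_def)

lemma edges_between_shrink_Some:
  assumes "B \<inter> X = {}"
  shows "edges_between (shrink_m m X) (Some ` B) (Some ` B) = edges_between m B B"
  using assms unfolding edges_between_def by (auto simp: sum.reindex intro!: sum.cong)

lemma edges_between_shrink_None:
  assumes "finite B" "B \<inter> X = {}"
  shows "edges_between (shrink_m m X) (insert None (Some ` B)) (insert None (Some ` B))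
    = edges_between m B B + 2 * edges_between m B X"
proof -
  have "edges_between (shrink_m m X) (insert None (Some ` B)) (insert None (Some ` B))
      = (\<Sum>u\<in>B. \<Sum>w\<in>X. m u w) + (\<Sum>u\<in>B. (\<Sum>w\<in>X. m u w) + (\<Sum>v\<in>B. m u v))"
    using assms unfolding edges_between_def
    by (auto simp: sum.reindex intro!: sum.cong arg_cong2[where f = "(+)"])
  then show ?thesis by (simp add: edges_between_def sum.distrib)
qed

lemma odd_sets_shrink_V_cases:
  assumes "R \<in> odd_sets (shrink_V V X)"
  obtains B where "B \<in> odd_sets (V - X)" "R = Some ` B"
    | B where "B \<subseteq> V - X" "even (card B)" "R = insert None (Some ` B)"
proof -
  define B where "B = Some -` R"
  have B: "B \<subseteq> V - X" and R: "R \<subseteq> insert None (Some ` B)" and "finite R"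
    using assms by (auto simp: B_def odd_sets_def shrink_V_eq intro: card_ge_0_finite)
  show thesis
  proof (cases "None \<in> R")
    case False
    then have "R = Some ` B" using R by (auto simp: B_def)
    moreover have "card R = card B" using calculation by (simp add: card_image)
    ultimately show thesis using that(1) assms B by (auto simp: odd_sets_def)
  next
    case True
    then have "R = insert None (Some ` B)" using R by (auto simp: B_def)
    moreover have "finite B" using \<open>finite R\<close> calculation by (simp add: finite_image_iff)
    ultimately show thesis using that(2) assms B by (auto simp: odd_sets_def card_image)
  qed
qed

lemma max_degree_shrink_le:
  assumes G: "multigraph V m" and "X \<subseteq> V"
    and deg: "\<And>u. u \<in> V \<Longrightarrow> degree V m u \<le> D"
    and cut: "edges_between m (V - X) X \<le> D"
  shows "max_degree (shrink_V V X) (shrink_m m X) \<le> D"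
proof -
  have fin: "finite V" using G by (simp add: multigraph_def)
  have "degree (shrink_V V X) (shrink_m m X) x \<le> D" if "x \<in> shrink_V V X" for x
    using that degree_shrink_None[OF fin] degree_shrink_Some[OF fin assms(2)] deg cut
    by (cases x) (auto simp: shrink_V_eq)
  then show ?thesis
    using fin by (auto simp: max_degree_def shrink_V_eq intro!: Max.boundedI)
qed

lemma Gamma_shrink_le:
  assumes G: "multigraph V m"
    and odd: "\<And>B. B \<in> odd_sets (V - X) \<Longrightarrow>
      edges_between m B B \<le> (D + 1) * (card B - 1)"
    and even: "\<And>B. B \<subseteq> V - X \<Longrightarrow> even (card B) \<Longrightarrow>
      edges_between m B B + 2 * edges_between m B X \<le> (D + 1) * card B"
    and nonempty: "odd_sets (shrink_V V X) \<noteq> {}"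
  shows "Gamma (shrink_V V X) (shrink_m m X) \<le> real D + 1"
proof -
  have fin: "finite V" using G by (simp add: multigraph_def)
  have "tval (shrink_m m X) R \<le> real D + 1" if R: "R \<in> odd_sets (shrink_V V X)" for R
  proof -
    have "edges_between (shrink_m m X) R R \<le> (D + 1) * (card R - 1)"
      using R
    proof (cases rule: odd_sets_shrink_V_cases)
      case (1 B)
      then have "B \<inter> X = {}" by (auto simp: odd_sets_def)
      then show ?thesis
        using 1 odd edges_between_shrink_Some[of B X m] by (simp add: card_image)
    next
      case (2 B)
      moreover have "finite B" using 2 fin finite_subset by blast
      moreover have "B \<inter> X = {}" using 2 by blast
      ultimately show ?thesis
        using even edges_between_shrink_None[of B X m] by (simp add: card_image)
    qed
    then show ?thesis using tval_le_iff[OF multigraph_shrink[OF G] R] by blast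
  qed
  moreover have "finite (odd_sets (shrink_V V X))"
    using fin by (auto simp: odd_sets_def shrink_V_eq)
  ultimately show ?thesis
    using nonempty by (auto simp: Gamma_def intro!: Max.boundedI)
qed

lemma odd_sets_mono: "A \<subseteq> B \<Longrightarrow> odd_sets A \<subseteq> odd_sets B"
  by (auto simp: odd_sets_def)

locale min_slack_overfull =
  fixes V S :: "'a set" and m :: "'a \<Rightarrow> 'a \<Rightarrow> nat" and D :: nat
  assumes G: "multigraph V m"
    and max_degree_le: "max_degree V m \<le> D"
    and Gamma_le: "Gamma V m \<le> real D + 1"
    and S_odd: "S \<in> odd_sets V"
    and S_overfull: "overfull m S D"
    and S_min_slack: "\<And>R. R \<in> odd_sets V \<Longrightarrow> overfull m R D \<Longrightarrow> slack m S D \<le> slack m R D"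
begin

lemma finite_V: "finite V"
  using G by (simp add: multigraph_def)

lemma S_subset: "S \<subseteq> V" and card_S: "card S \<ge> 3" and odd_card_S: "odd (card S)"
  using S_odd by (auto simp: odd_sets_def)

lemma finite_S: "finite S"
  using S_subset finite_V finite_subset by blast

lemma degree_le: "u \<in> V \<Longrightarrow> degree V m u \<le> D"
  using max_degree_le finite_V unfolding max_degree_def
  by (meson Max_ge finite_imageI image_eqI order_trans)

lemma edges_between_odd_le: "B \<in> odd_sets V \<Longrightarrow> edges_between m B B \<le> (D + 1) * (card B - 1)"
proof -
  assume B: "B \<in> odd_sets V"
  have "finite (odd_sets V)"
    using finite_V by (auto simp: odd_sets_def)
  then have "tval m B \<le> Gamma V m"
    using B by (simp add: Gamma_def)
  then show ?thesis
    using Gamma_le tval_le_iff[OF G B, of D] by linarith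
qed

lemma edges_between_V_le: "B \<subseteq> V \<Longrightarrow> edges_between m B V \<le> D * card B"
  using degree_le sum_bounded_above[of B "degree V m" D]
  by (auto simp: edges_between_def degree_def mult.commute)

lemma S_overfull_edges: "D * (card S - 1) < edges_between m S S"
  using S_overfull overfull_iff[OF G S_odd] by blast

lemma S_min_slack_edges:
  assumes "R \<in> odd_sets V" "D * (card R - 1) < edges_between m R R"
  shows "(D + 1) * (card S - 1) + edges_between m R R \<le> (D + 1) * (card R - 1) + edges_between m S S"
  using assms S_min_slack overfull_iff[OF G assms(1)] slack_le_iff[OF G assms(1) S_odd] by blast

lemma cut_S_less: "edges_between m S (V - S) < D"
proof -
  have "edges_between m S V = edges_between m S S + edges_between m S (V - S)"
    using edges_between_Un_right[OF finite_S, of "V - S" m S] finite_V S_subset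
    by (simp add: Un_absorb1)
  moreover have "D * card S = D * (card S - 1) + D"
    using card_S by (cases "card S") auto
  ultimately show ?thesis
    using edges_between_V_le[OF S_subset] S_overfull_edges by linarith
qed

lemma even_outside_S_le:
  assumes B: "B \<subseteq> V - S" and even: "even (card B)"
  shows "edges_between m B B + 2 * edges_between m B S \<le> (D + 1) * card B"
proof -
  have sym: "\<forall>u v. m u v = m v u" using G by (simp add: multigraph_def)
  have finB: "finite B" using B finite_V finite_subset by blast
  have disj: "B \<inter> S = {}" using B by blast
  define R where "R = B \<union> S"
  have card_R: "card R - 1 = card B + (card S - 1)"
    using card_Un_disjoint[OF finB finite_S disj] card_S by (simp add: R_def)
  have R: "R \<in> odd_sets V"
    using card_Un_disjoint[OF finB finite_S disj] B S_subset even odd_card_S card_S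
    by (auto simp: R_def odd_sets_def)
  have edges_R: "edges_between m R R
      = edges_between m B B + 2 * edges_between m B S + edges_between m S S"
    unfolding R_def by (rule edges_between_Un_self[OF sym finB finite_S disj])
  have distrib: "k * (card R - 1) = k * card B + k * (card S - 1)" for k
    unfolding card_R by (rule add_mult_distrib2)
  show ?thesis
  proof (cases "D * (card R - 1) < edges_between m R R")
    case True
    show ?thesis
      using S_min_slack_edges[OF R True] edges_R distrib[of "D + 1"] by linarith
  next
    case False
    show ?thesis
      using False S_overfull_edges edges_R distrib[of D] by (simp add: algebra_simps)
  qed
qed

lemma even_inside_S_le:
  assumes B: "B \<subseteq> S" and even: "even (card B)"
  shows "edges_between m B B + 2 * edges_between m B (V - S) \<le> (D + 1) * card B"
proof -
  have sym: "\<forall>u v. m u v = m v u" and diag: "\<forall>u. m u u = 0"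
    using G by (auto simp: multigraph_def)
  define T where "T = S - B"
  have finB: "finite B" and finT: "finite T"
    using B finite_S finite_subset by (auto simp: T_def)
  have disj: "B \<inter> T = {}" and S_eq: "S = B \<union> T" and V_eq: "V = S \<union> (V - S)"
    using B S_subset by (auto simp: T_def)
  have card_S_eq: "card S = card B + card T"
    using card_Un_disjoint[OF finB finT disj] S_eq by simp
  have odd_T: "odd (card T)" using card_S_eq odd_card_S even by simp
  have distrib: "k * (card S - 1) = k * card B + k * (card T - 1)" for k
    using card_S_eq odd_T by (cases "card T") (simp_all add: algebra_simps)
  have edges_S: "edges_between m S S
      = edges_between m B B + 2 * edges_between m B T + edges_between m T T"
    unfolding S_eq by (rule edges_between_Un_self[OF sym finB finT disj])
  have "edges_between m B V = edges_between m B S + edges_between m B (V - S)"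
    using edges_between_Un_right[OF finite_S, of "V - S"] finite_V V_eq by simp
  also have "edges_between m B S = edges_between m B B + edges_between m B T"
    unfolding S_eq by (rule edges_between_Un_right[OF finB finT disj])
  finally have degrees: "edges_between m B B + edges_between m B T + edges_between m B (V - S)
      \<le> D * card B"
    using edges_between_V_le[of B] B S_subset by simp
  show ?thesis
  proof (cases "T \<in> odd_sets V \<and> D * (card T - 1) < edges_between m T T")
    case True
    \<comment> \<open>comparing the slacks of S and T gives (D + 1) |B| \<le> e(B,B) + 2 e(B,T)\<close>
    then show ?thesis
      using S_min_slack_edges[of T] edges_S degrees distrib[of "D + 1"] by auto
  next
    case False
    have "edges_between m T T \<le> D * (card T - 1)"
    proof (cases "card T \<ge> 3")
      case True
      then show ?thesis
        using False odd_T B S_subset by (auto simp: T_def odd_sets_def)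
    next
      case False
      then have "card T = 1"
        using odd_T by presburger
      then obtain x where "T = {x}"
        by (rule card_1_singletonE)
      then show ?thesis using diag by (simp add: edges_between_def)
    qed
    then show ?thesis
      using S_overfull_edges edges_S degrees distrib[of D] by auto
  qed
qed

lemma shrink_S_bounds:
  "max_degree (shrink_V V S) (shrink_m m S) \<le> D
    \<and> (odd_sets (shrink_V V S) \<noteq> {} \<longrightarrow> Gamma (shrink_V V S) (shrink_m m S) \<le> real D + 1)"
proof (intro conjI impI)
  have "edges_between m (V - S) S \<le> D"
    using cut_S_less edges_between_commute[of m S "V - S"] G by (simp add: multigraph_def)
  then show "max_degree (shrink_V V S) (shrink_m m S) \<le> D"
    using max_degree_shrink_le[OF G S_subset degree_le] by blast
next
  assume nonempty: "odd_sets (shrink_V V S) \<noteq> {}"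
  show "Gamma (shrink_V V S) (shrink_m m S) \<le> real D + 1"
  proof (rule Gamma_shrink_le[OF G])
    show "B \<in> odd_sets (V - S) \<Longrightarrow> edges_between m B B \<le> (D + 1) * (card B - 1)" for B
      using edges_between_odd_le odd_sets_mono[of "V - S" V] by blast
  qed (use nonempty even_outside_S_le in auto)
qed

lemma shrink_complement_bounds:
  "max_degree (shrink_V V (V - S)) (shrink_m m (V - S)) \<le> D
    \<and> (odd_sets (shrink_V V (V - S)) \<noteq> {} \<longrightarrow>
      Gamma (shrink_V V (V - S)) (shrink_m m (V - S)) \<le> real D + 1)"
proof -
  have complement: "V - (V - S) = S" using S_subset by blast
  show ?thesis
  proof (intro conjI impI)
    show "max_degree (shrink_V V (V - S)) (shrink_m m (V - S)) \<le> D"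
      using max_degree_shrink_le[OF G _ degree_le] cut_S_less complement by auto
  next
    assume nonempty: "odd_sets (shrink_V V (V - S)) \<noteq> {}"
    show "Gamma (shrink_V V (V - S)) (shrink_m m (V - S)) \<le> real D + 1"
    proof (rule Gamma_shrink_le[OF G])
      show "B \<in> odd_sets (V - (V - S)) \<Longrightarrow>
          edges_between m B B \<le> (D + 1) * (card B - 1)" for B
        using edges_between_odd_le odd_sets_mono[of "V - (V - S)" V] by blast
    qed (use nonempty even_inside_S_le complement in auto)
  qed
qed

end

theorem lemmaH:
  fixes V S :: "'a set" and m :: "'a \<Rightarrow> 'a \<Rightarrow> nat"
  assumes G: "multigraph V m"
    and even_order: "even (card V)"
    and lower: "real (max_degree V m) < Gamma V m"
    and upper: "Gamma V m \<le> real (max_degree V m) + 1"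
    and S: "S \<in> odd_sets V"
    and S_over: "overfull m S (max_degree V m)"
    and S_min: "\<forall>R \<in> odd_sets V. overfull m R (max_degree V m) \<longrightarrow>
                  slack m S (max_degree V m) \<le> slack m R (max_degree V m)"
  shows "max_degree (shrink_V V S) (shrink_m m S) \<le> max_degree V m
    \<and> (odd_sets (shrink_V V S) \<noteq> {} \<longrightarrow>
         Gamma (shrink_V V S) (shrink_m m S) \<le> real (max_degree V m) + 1)
    \<and> max_degree (shrink_V V (V - S)) (shrink_m m (V - S)) \<le> max_degree V m
    \<and> (odd_sets (shrink_V V (V - S)) \<noteq> {} \<longrightarrow>
         Gamma (shrink_V V (V - S)) (shrink_m m (V - S)) \<le> real (max_degree V m) + 1)"
proof -
  interpret min_slack_overfull V S m "max_degree V m"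
    using G upper S S_over S_min by unfold_locales auto
  show ?thesis
    using shrink_S_bounds shrink_complement_bounds by blast
qed

end
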